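(* There exists a graded $\mathbb{R}$-algebra isomorphism $$H^*(BSO(8);\mathbb{R})\cong \mathbb{R}[a,b,c,d]$$ which intertwines the triality automorphism on $H^*(BSO(8);\mathbb{R})$ with the triality action on $\mathbb{R}[a,b,c,d]$, where the grading on $H^*(BSO(8);\mathbb{R})$ is the cohomological degree divided by $4$ and the grading on $\mathbb{R}[a,b,c,d]$ is $\deg a=1$, $\deg b=\deg c=2$, $\deg d=3$.
   Context: $a,b,c,d$ are the parameters of the miniversal deformation $F(x,y,a,b,c,d)=x^3-3xy^2+a(x^2+y^2)+bx+cy+d$ of the singularity $x^3-3xy^2$ (type $D_4^-$); with the stated degrees $F$ is quasihomogeneous. The triality acts on $\mathbb{R}[a,b,c,d]$ by the algebra automorphism fixing $a$ and $d$ and acting on the span of $b,c$ by the rotation by $120^\circ$ (induced from $(a,b,c,d)\mapsto(a,\phi_0(b,c),d)$, $\phi_0$ the rotation by $120^\circ$). On $H^*(BSO(8);\mathbb{R})=\mathbb{R}[p_1,p_2,p_3,e]=\mathbb{R}[L_1,\dots,L_4]^W$ ($W$ the Weyl group of $D_4$, $\deg L_i=2$, $p_i=\sigma_i(L_1^2,\dots,L_4^2)$, $e=L_1L_2L_3L_4$) the triality automorphism is the algebra automorphism with $\phi(L_1)=\tfrac12(L_1+L_2+L_3+L_4)$, $\phi(L_2)=\tfrac12(L_1+L_2-L_3-L_4)$, $\phi(L_3)=\tfrac12(L_1-L_2+L_3-L_4)$, $\phi(L_4)=\tfrac12(-L_1+L_2+L_3-L_4)$. *)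

theory Defs
  imports Complex_Main "HOL-Library.Poly_Mapping" "HOL-Combinatorics.Permutations"
begin

(* Real polynomials in the variables X_0, X_1, ... : finitely supported maps from
monomials (exponent vectors nat =>0 nat) to real coefficients, with the
convolution product of HOL-Library.Poly_Mapping. *)

type_synonym rpoly = "(nat \<Rightarrow>\<^sub>0 nat) \<Rightarrow>\<^sub>0 real"

definition Const :: "real \<Rightarrow> rpoly" where
  "Const c = Poly_Mapping.single 0 c"

definition Var :: "nat \<Rightarrow> rpoly" where
  "Var i = Poly_Mapping.single (Poly_Mapping.single i 1) 1"

definition vars :: "rpoly \<Rightarrow> nat set" where
  "vars p = \<Union> (Poly_Mapping.keys ` Poly_Mapping.keys p)"

definition poly4 :: "rpoly set" where
  "poly4 = {p. vars p \<subseteq> {0..<4}}"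

definition subst :: "(nat \<Rightarrow> rpoly) \<Rightarrow> rpoly \<Rightarrow> rpoly" where
  "subst s p = (\<Sum>m\<in>Poly_Mapping.keys p.
       Const (Poly_Mapping.lookup p m) *
       (\<Prod>i\<in>Poly_Mapping.keys m. s i ^ Poly_Mapping.lookup m i))"

(* Homogeneous of ordinary total degree n (zero counts as homogeneous of every degree). *)
definition homog :: "nat \<Rightarrow> rpoly \<Rightarrow> bool" where
  "homog n p \<longleftrightarrow> (\<forall>m\<in>Poly_Mapping.keys p. (\<Sum>i\<in>Poly_Mapping.keys m. Poly_Mapping.lookup m i) = n)"

(* Weighted homogeneity in R[a,b,c,d] = R[X_0,X_1,X_2,X_3], with weights
deg a = 1, deg b = deg c = 2, deg d = 3. *)
definition abcd_weight :: "nat \<Rightarrow> nat" where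
  "abcd_weight i = (if i = 0 then 1 else if i = 3 then 3 else 2)"

definition whomog :: "nat \<Rightarrow> rpoly \<Rightarrow> bool" where
  "whomog k p \<longleftrightarrow> (\<forall>m\<in>Poly_Mapping.keys p.
      (\<Sum>i\<in>Poly_Mapping.keys m. abcd_weight i * Poly_Mapping.lookup m i) = k)"

(* Weyl group W(D_4) acting on R[L_1..L_4] = R[X_0..X_3]: permutations of the L_i
combined with an even number of sign changes. *)
definition weyl_D4_subst :: "(nat \<Rightarrow> nat) \<Rightarrow> (nat \<Rightarrow> real) \<Rightarrow> nat \<Rightarrow> rpoly" where
  "weyl_D4_subst \<pi> \<epsilon> i = (if i < 4 then Const (\<epsilon> i) * Var (\<pi> i) else Var i)"

definition weyl_D4 :: "((nat \<Rightarrow> nat) \<times> (nat \<Rightarrow> real)) set" where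
  "weyl_D4 = {(\<pi>, \<epsilon>). \<pi> permutes {0..<4} \<and> (\<forall>i<4. \<epsilon> i = 1 \<or> \<epsilon> i = -1)
                        \<and> (\<Prod>i<4. \<epsilon> i) = 1}"

(* H^*(BSO(8);R) = R[L_1,...,L_4]^W (L_{i+1} is X_i). *)
definition HBSO8 :: "rpoly set" where
  "HBSO8 = {p \<in> poly4. \<forall>(\<pi>, \<epsilon>)\<in>weyl_D4. subst (weyl_D4_subst \<pi> \<epsilon>) p = p}"

(* Cohomological grading divided by 4: deg L_i = 2, so a homogeneous polynomial of
total degree n in the L_i has cohomological degree 2n, i.e. grading degree k iff n = 2k. *)
definition H_graded :: "nat \<Rightarrow> rpoly \<Rightarrow> bool" where
  "H_graded k p \<longleftrightarrow> homog (2 * k) p"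

definition triality_L :: "nat \<Rightarrow> rpoly" where
  "triality_L i =
    (if i = 0 then Const (1/2) * (Var 0 + Var 1 + Var 2 + Var 3)
     else if i = 1 then Const (1/2) * (Var 0 + Var 1 - Var 2 - Var 3)
     else if i = 2 then Const (1/2) * (Var 0 - Var 1 + Var 2 - Var 3)
     else if i = 3 then Const (1/2) * (- Var 0 + Var 1 + Var 2 - Var 3)
     else Var i)"

definition triality_H :: "rpoly \<Rightarrow> rpoly" where
  "triality_H = subst triality_L"

(* Triality on R[a,b,c,d] (a = X_0, b = X_1, c = X_2, d = X_3): fixes a, d and
rotates span{b,c} by 120 degrees: b to cos t b + sin t c, c to -sin t b + cos t c. *)
definition triality_abcd_var :: "nat \<Rightarrow> rpoly" where
  "triality_abcd_var i =
    (if i = 1 then Const (cos (2*pi/3)) * Var 1 + Const (sin (2*pi/3)) * Var 2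
     else if i = 2 then Const (- sin (2*pi/3)) * Var 1 + Const (cos (2*pi/3)) * Var 2
     else Var i)"

definition triality_abcd :: "rpoly \<Rightarrow> rpoly" where
  "triality_abcd = subst triality_abcd_var"

end

(*
  The Weyl-invariant polynomials R[L_1, ..., L_4]^W form the polynomial algebra on
  p_1, p_2, e, p_3. Transpositions and double sign changes lie in W, so the lexicographically
  leading monomial of an invariant has non-increasing exponents whose neighbours have even sums;
  such a monomial is the leading monomial of exactly one product p_1^a p_2^b e^c p_3^d. Cancelling
  leading terms therefore shows that X_i |-> (p_1, p_2, e, p_3)_i maps R[X_0, ..., X_3] onto the
  invariants, and comparing leading terms shows that it is injective.

  Triality fixes p_1 and p_3 - p_1 p_2 / 6 and rotates the pair (sqrt 3 e, p_2 / 2 - p_1^2 / 8)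
  by 120 degrees. Hence a, b, c, d |-> p_1, sqrt 3 e, p_2 / 2 - p_1^2 / 8, p_3 - p_1 p_2 / 6 is an
  algebra isomorphism R[a, b, c, d] -> H^*(BSO(8); R) intertwining the two trialities. It is
  compatible with the gradings because it intertwines the dilations X_i |-> 4^(deg X_i) X_i and
  L_i |-> 2 L_i, whose eigenspaces are the graded pieces. The required map is its inverse.
*)

theory Submission
  imports Defs "HOL-Library.Product_Lexorder"
begin

abbreviation lookup :: "('a \<Rightarrow>\<^sub>0 'b::zero) \<Rightarrow> 'a \<Rightarrow> 'b" where
  "lookup \<equiv> Poly_Mapping.lookup"
abbreviation keys :: "('a \<Rightarrow>\<^sub>0 'b::zero) \<Rightarrow> 'a set" where
  "keys \<equiv> Poly_Mapping.keys"
abbreviation single :: "'a \<Rightarrow> 'b \<Rightarrow> ('a \<Rightarrow>\<^sub>0 'b::zero)" where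
  "single \<equiv> Poly_Mapping.single"

lemma the_inv_into_commute2:
  assumes h: "bij_betw h A B" and f: "\<And>x x'. x \<in> A \<Longrightarrow> x' \<in> A \<Longrightarrow> f x x' \<in> A"
    and comm: "\<And>x x'. x \<in> A \<Longrightarrow> x' \<in> A \<Longrightarrow> h (f x x') = g (h x) (h x')"
    and y: "y \<in> B" "y' \<in> B"
  shows "the_inv_into A h (g y y') = f (the_inv_into A h y) (the_inv_into A h y')"
proof -
  let ?x = "the_inv_into A h y" and ?x' = "the_inv_into A h y'"
  have x: "?x \<in> A" "h ?x = y" "?x' \<in> A" "h ?x' = y'"
    using bij_betw_apply[OF bij_betw_the_inv_into[OF h]] f_the_inv_into_f_bij_betw[OF h] y by auto
  have "the_inv_into A h (g y y') = the_inv_into A h (h (f ?x ?x'))"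
    using comm[OF x(1,3)] x(2,4) by simp
  also have "\<dots> = f ?x ?x'"
    using the_inv_into_f_f[OF bij_betw_imp_inj_on[OF h] f[OF x(1,3)]] .
  finally show ?thesis .
qed

lemma the_inv_into_commute:
  assumes "bij_betw h A B" "\<And>x. x \<in> A \<Longrightarrow> f x \<in> A" "\<And>x. x \<in> A \<Longrightarrow> h (f x) = g (h x)" "y \<in> B"
  shows "the_inv_into A h (g y) = f (the_inv_into A h y)"
  using the_inv_into_commute2[of h A B "\<lambda>x _. f x" "\<lambda>y _. g y" y y] assms by simp

section \<open>Substitution homomorphisms\<close>

lemma Const_0 [simp]: "Const 0 = 0" by (simp add: Const_def)
lemma Const_1 [simp]: "Const 1 = 1" by (simp add: Const_def)
lemma Const_numeral [simp]: "Const (numeral n) = numeral n" by (simp add: Const_def)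
lemma Const_add: "Const (a + b) = Const a + Const b" by (simp add: Const_def single_add)
lemma Const_mult: "Const (a * b) = Const a * Const b" by (simp add: Const_def mult_single)
lemma Const_uminus: "Const (- a) = - Const a" by (simp add: Const_def single_uminus)

lemma Const_power: "Const (a ^ n) = Const a ^ n"
  by (induct n) (simp_all add: Const_mult)

lemma Const_prod: "Const (prod f A) = (\<Prod>i\<in>A. Const (f i))"
  by (induct A rule: infinite_finite_induct) (simp_all add: Const_mult)

lemma Const_inverse_mult:
  assumes "c \<noteq> 0" shows "Const (1 / c) * Const c = 1"
  using assms by (simp add: Const_mult[symmetric])

lemma poly_mapping_eq_sum_single: "p = (\<Sum>m\<in>keys p. single m (lookup p m))"
  by (rule poly_mapping_eqI) (simp add: lookup_sum lookup_single when_def in_keys_iff)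

lemma lookup_Const_mult: "lookup (Const c * p) m = c * lookup p m"
proof -
  have "Const c * p = (\<Sum>m'\<in>keys p. single m' (c * lookup p m'))"
    by (subst poly_mapping_eq_sum_single[of p]) (simp add: sum_distrib_left Const_def mult_single)
  then show ?thesis
    by (simp add: lookup_sum lookup_single when_def in_keys_iff)
qed

lemma keys_Const_mult: "keys (Const c * p) \<subseteq> keys p"
  by (auto simp: in_keys_iff lookup_Const_mult)

definition subst_monom :: "(nat \<Rightarrow> rpoly) \<Rightarrow> (nat \<Rightarrow>\<^sub>0 nat) \<Rightarrow> rpoly" where
  "subst_monom s m = (\<Prod>i\<in>keys m. s i ^ lookup m i)"

lemma subst_eq_sum: "subst s p = (\<Sum>m\<in>keys p. Const (lookup p m) * subst_monom s m)"
  by (simp add: subst_def subst_monom_def)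

lemma subst_eq_sum_superset:
  assumes "finite S" "keys p \<subseteq> S"
  shows "subst s p = (\<Sum>m\<in>S. Const (lookup p m) * subst_monom s m)"
  unfolding subst_eq_sum
  by (rule sum.mono_neutral_left) (use assms in \<open>auto simp: in_keys_iff\<close>)

lemma subst_monom_superset:
  assumes "finite S" "keys m \<subseteq> S"
  shows "subst_monom s m = (\<Prod>i\<in>S. s i ^ lookup m i)"
  unfolding subst_monom_def
  by (rule prod.mono_neutral_left) (use assms in \<open>auto simp: in_keys_iff\<close>)

lemma subst_monom_add: "subst_monom s (m + m') = subst_monom s m * subst_monom s m'"
proof -
  let ?S = "keys m \<union> keys m'"
  have "subst_monom s (m + m') = (\<Prod>i\<in>?S. s i ^ lookup (m + m') i)"
    by (rule subst_monom_superset) (auto dest: subsetD[OF keys_add])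
  also have "\<dots> = (\<Prod>i\<in>?S. s i ^ lookup m i) * (\<Prod>i\<in>?S. s i ^ lookup m' i)"
    by (simp add: lookup_add power_add prod.distrib)
  also have "\<dots> = subst_monom s m * subst_monom s m'"
    by (simp add: subst_monom_superset[symmetric])
  finally show ?thesis .
qed

lemma subst_add: "subst s (p + q) = subst s p + subst s q"
proof -
  let ?S = "keys p \<union> keys q"
  have "subst s (p + q) = (\<Sum>m\<in>?S. Const (lookup (p + q) m) * subst_monom s m)"
    by (rule subst_eq_sum_superset) (auto dest: subsetD[OF keys_add])
  also have "\<dots> = (\<Sum>m\<in>?S. Const (lookup p m) * subst_monom s m)
                  + (\<Sum>m\<in>?S. Const (lookup q m) * subst_monom s m)"
    by (simp add: lookup_add Const_add distrib_right sum.distrib)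
  also have "\<dots> = subst s p + subst s q"
    by (simp add: subst_eq_sum_superset[symmetric])
  finally show ?thesis .
qed

lemma subst_0 [simp]: "subst s 0 = 0"
  by (simp add: subst_def)

lemma subst_sum: "subst s (sum f A) = (\<Sum>a\<in>A. subst s (f a))"
  by (induct A rule: infinite_finite_induct) (simp_all add: subst_add)

lemma subst_single: "subst s (single m c) = Const c * subst_monom s m"
  by (cases "c = 0") (simp_all add: subst_eq_sum)

lemma times_eq_sum_single:
  "p * q = (\<Sum>l\<in>keys p. \<Sum>r\<in>keys q. single (l + r) (lookup p l * lookup q r))"
proof -
  have "p * q = (\<Sum>l\<in>keys p. single l (lookup p l)) * (\<Sum>r\<in>keys q. single r (lookup q r))"
    using poly_mapping_eq_sum_single[of p] poly_mapping_eq_sum_single[of q] by simp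
  then show ?thesis
    by (simp add: sum_product mult_single)
qed

lemma subst_mult: "subst s (p * q) = subst s p * subst s q"
proof -
  have "subst s (p * q) = (\<Sum>l\<in>keys p. \<Sum>r\<in>keys q.
          Const (lookup p l) * subst_monom s l * (Const (lookup q r) * subst_monom s r))"
    by (subst times_eq_sum_single)
       (simp add: subst_sum subst_single subst_monom_add Const_mult mult_ac)
  also have "\<dots> = subst s p * subst s q"
    by (simp add: subst_eq_sum sum_product)
  finally show ?thesis .
qed

lemma subst_Const [simp]: "subst s (Const c) = Const c"
  by (simp add: Const_def subst_single subst_monom_def)

lemma subst_1 [simp]: "subst s 1 = 1"
  using subst_Const[of s 1] by simp

lemma subst_numeral [simp]: "subst s (numeral n) = numeral n"
  using subst_Const[of s "numeral n"] by simp

lemma subst_Var [simp]: "subst s (Var i) = s i"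
  by (simp add: Var_def subst_single subst_monom_def)

lemma subst_power: "subst s (p ^ n) = subst s p ^ n"
  by (induct n) (simp_all add: subst_mult)

lemma subst_prod: "subst s (prod f A) = (\<Prod>a\<in>A. subst s (f a))"
  by (induct A rule: infinite_finite_induct) (simp_all add: subst_mult)

lemma subst_uminus: "subst s (- p) = - subst s p"
  using subst_add[of s "- p" p] by (simp add: eq_neg_iff_add_eq_0)

lemma subst_diff: "subst s (p - q) = subst s p - subst s q"
  unfolding diff_conv_add_uminus by (simp only: subst_add subst_uminus)

lemmas subst_simps = subst_add subst_mult subst_power subst_diff subst_uminus subst_sum subst_prod

lemma subst_subst: "subst t (subst s p) = subst (\<lambda>i. subst t (s i)) p"
  unfolding subst_eq_sum[of s p] subst_eq_sum[of "\<lambda>i. subst t (s i)" p]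
  by (simp add: subst_sum subst_mult subst_prod subst_power subst_monom_def)

definition rename_monom :: "(nat \<Rightarrow> nat) \<Rightarrow> (nat \<Rightarrow>\<^sub>0 nat) \<Rightarrow> (nat \<Rightarrow>\<^sub>0 nat)" where
  "rename_monom \<pi> m = (\<Sum>i\<in>keys m. single (\<pi> i) (lookup m i))"

lemma lookup_rename_monom: "inj \<pi> \<Longrightarrow> lookup (rename_monom \<pi> m) (\<pi> j) = lookup m j"
  by (simp add: rename_monom_def lookup_sum lookup_single when_def inj_eq in_keys_iff)

lemma rename_monom_id: "rename_monom (\<lambda>i. i) m = m"
  unfolding rename_monom_def by (rule poly_mapping_eq_sum_single[symmetric])

lemma inj_rename_monom: "inj \<pi> \<Longrightarrow> inj (rename_monom \<pi>)"
  by (intro injI poly_mapping_eqI) (metis lookup_rename_monom)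

lemma Const_mult_Var_power: "(Const c * Var j) ^ k = single (single j k) (c ^ k)"
proof (induct k)
  case (Suc k)
  have "single j 1 + single j k = single j (Suc k)" by (simp add: single_add[symmetric])
  then show ?case using Suc by (simp add: Const_def Var_def mult_single)
qed simp

lemma subst_scaled_rename:
  "subst (\<lambda>i. Const (c i) * Var (\<pi> i)) p =
     (\<Sum>m\<in>keys p. single (rename_monom \<pi> m) (lookup p m * (\<Prod>i\<in>keys m. c i ^ lookup m i)))"
proof -
  have "finite S \<Longrightarrow> (\<Prod>i\<in>S. (Const (c i) * Var (\<pi> i)) ^ lookup m i) =
          single (\<Sum>i\<in>S. single (\<pi> i) (lookup m i)) (\<Prod>i\<in>S. c i ^ lookup m i)" for S m
    by (induct S rule: finite_induct) (simp_all add: Const_mult_Var_power mult_single)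
  then show ?thesis
    by (simp add: subst_eq_sum subst_monom_def rename_monom_def Const_def mult_single)
qed

lemma lookup_subst_scaled_rename:
  assumes "inj \<pi>"
  shows "lookup (subst (\<lambda>i. Const (c i) * Var (\<pi> i)) p) (rename_monom \<pi> m)
           = lookup p m * (\<Prod>i\<in>keys m. c i ^ lookup m i)"
proof -
  have "lookup (subst (\<lambda>i. Const (c i) * Var (\<pi> i)) p) (rename_monom \<pi> m) =
     (\<Sum>m'\<in>keys p. if m' = m then lookup p m' * (\<Prod>i\<in>keys m'. c i ^ lookup m' i) else 0)"
    unfolding subst_scaled_rename lookup_sum lookup_single when_def
    using inj_rename_monom[OF assms] by (intro sum.cong) (auto dest: injD)
  then show ?thesis
    by (simp add: in_keys_iff)
qed

definition scale_vars :: "(nat \<Rightarrow> real) \<Rightarrow> rpoly \<Rightarrow> rpoly" where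
  "scale_vars c = subst (\<lambda>i. Const (c i) * Var i)"

lemma lookup_scale_vars:
  "lookup (scale_vars c p) m = lookup p m * (\<Prod>i\<in>keys m. c i ^ lookup m i)"
  using lookup_subst_scaled_rename[of "\<lambda>i. i" c p m] by (simp add: scale_vars_def rename_monom_id)

lemma subst_Var_id: "subst Var p = p"
  using lookup_scale_vars[of "\<lambda>_. 1" p] by (intro poly_mapping_eqI) (simp add: scale_vars_def)

lemma weighted_degree_iff_scale_vars:
  fixes b :: real
  assumes "b > 1"
  shows "(\<forall>m\<in>keys p. (\<Sum>i\<in>keys m. w i * lookup m i) = k) \<longleftrightarrow>
           scale_vars (\<lambda>i. b ^ w i) p = Const (b ^ k) * p"
proof -
  have "scale_vars (\<lambda>i. b ^ w i) p = Const (b ^ k) * p \<longleftrightarrow>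
          (\<forall>m. lookup p m * b ^ (\<Sum>i\<in>keys m. w i * lookup m i) = b ^ k * lookup p m)"
    by (simp add: poly_mapping_eq_iff fun_eq_iff lookup_scale_vars lookup_Const_mult
                  power_sum power_mult)
  also have "\<dots> \<longleftrightarrow> (\<forall>m\<in>keys p. (\<Sum>i\<in>keys m. w i * lookup m i) = k)"
    using assms by (auto simp: in_keys_iff)
  finally show ?thesis ..
qed

lemma homog_iff_scale_vars: "homog n p \<longleftrightarrow> scale_vars (\<lambda>_. 2) p = Const (2 ^ n) * p"
  using weighted_degree_iff_scale_vars[of 2 p "\<lambda>_. 1" n] by (simp add: homog_def)

lemma whomog_iff_scale_vars:
  "whomog k p \<longleftrightarrow> scale_vars (\<lambda>i. 4 ^ abcd_weight i) p = Const (4 ^ k) * p"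
  using weighted_degree_iff_scale_vars[of 4 p abcd_weight k] by (simp add: whomog_def)

lemma poly4_iff: "p \<in> poly4 \<longleftrightarrow> (\<forall>m\<in>keys p. keys m \<subseteq> {0..<4})"
  by (auto simp: poly4_def vars_def)

lemma poly4_Const [simp]: "Const c \<in> poly4"
  unfolding poly4_iff Const_def by simp

lemma poly4_0 [simp]: "0 \<in> poly4"
  using poly4_Const[of 0] by simp

lemma poly4_1 [simp]: "1 \<in> poly4"
  using poly4_Const[of 1] by simp

lemma poly4_numeral [simp]: "numeral n \<in> poly4"
  using poly4_Const[of "numeral n"] by simp

lemma poly4_Var [simp]: "i < 4 \<Longrightarrow> Var i \<in> poly4"
  unfolding poly4_iff Var_def by simp

lemma poly4_single: "keys m \<subseteq> {0..<4} \<Longrightarrow> single m c \<in> poly4"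
  unfolding poly4_iff by simp

lemma poly4_add [simp]: "p \<in> poly4 \<Longrightarrow> q \<in> poly4 \<Longrightarrow> p + q \<in> poly4"
  unfolding poly4_iff by (meson UnE keys_add subsetD)

lemma poly4_uminus [simp]: "p \<in> poly4 \<Longrightarrow> - p \<in> poly4"
  by (simp add: poly4_iff)

lemma poly4_diff [simp]: "p \<in> poly4 \<Longrightarrow> q \<in> poly4 \<Longrightarrow> p - q \<in> poly4"
  by (simp only: diff_conv_add_uminus poly4_add poly4_uminus)

lemma poly4_mult [simp]:
  assumes "p \<in> poly4" "q \<in> poly4" shows "p * q \<in> poly4"
  unfolding poly4_iff
proof
  fix m assume "m \<in> keys (p * q)"
  then obtain l r where "l \<in> keys p" "r \<in> keys q" "m = l + r"
    using keys_mult[of p q] by blast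
  with assms show "keys m \<subseteq> {0..<4}"
    by (auto simp: poly4_iff dest!: subsetD[OF keys_add])
qed

lemma poly4_power [simp]: "p \<in> poly4 \<Longrightarrow> p ^ n \<in> poly4"
  by (induct n) simp_all

lemma poly4_sum: "(\<And>a. a \<in> A \<Longrightarrow> f a \<in> poly4) \<Longrightarrow> sum f A \<in> poly4"
  by (induct A rule: infinite_finite_induct) simp_all

lemma poly4_prod: "(\<And>a. a \<in> A \<Longrightarrow> f a \<in> poly4) \<Longrightarrow> prod f A \<in> poly4"
  by (induct A rule: infinite_finite_induct) simp_all

lemma subst_in_poly4:
  assumes "\<And>i. i \<in> vars p \<Longrightarrow> s i \<in> poly4"
  shows "subst s p \<in> poly4"
  unfolding subst_eq_sum subst_monom_def
  by (intro poly4_sum poly4_mult poly4_Const poly4_prod poly4_power assms) (auto simp: vars_def)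

lemma subst_poly4_in_poly4:
  "q \<in> poly4 \<Longrightarrow> (\<And>i. i < 4 \<Longrightarrow> s i \<in> poly4) \<Longrightarrow> subst s q \<in> poly4"
  by (rule subst_in_poly4) (metis atLeastLessThan_iff mem_Collect_eq poly4_def subsetD)

lemma less_4_cases: "(i::nat) < 4 \<longleftrightarrow> i = 0 \<or> i = 1 \<or> i = 2 \<or> i = 3"
  by auto

lemma nat_cases_4: "(i::nat) = 0 \<or> i = 1 \<or> i = 2 \<or> i = 3 \<or> i \<ge> 4"
  by auto

section \<open>Lexicographically leading terms\<close>

definition exps4 :: "(nat \<Rightarrow>\<^sub>0 nat) \<Rightarrow> nat \<times> nat \<times> nat \<times> nat" where
  "exps4 m = (lookup m 0, lookup m 1, lookup m 2, lookup m 3)"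

definition monom4 :: "nat \<times> nat \<times> nat \<times> nat \<Rightarrow> (nat \<Rightarrow>\<^sub>0 nat)" where
  "monom4 t = (case t of (a, b, c, d) \<Rightarrow> single 0 a + single 1 b + single 2 c + single 3 d)"

lemma exps4_monom4 [simp]: "exps4 (monom4 t) = t"
  by (cases t) (simp add: exps4_def monom4_def lookup_add lookup_single)

lemma keys_monom4: "keys (monom4 t) \<subseteq> {0..<4}"
  by (auto simp: monom4_def split: prod.splits if_splits dest!: subsetD[OF keys_add])

lemma monom4_exps4:
  assumes "keys m \<subseteq> {0..<4}" shows "monom4 (exps4 m) = m"
proof (rule poly_mapping_eqI)
  fix i
  show "lookup (monom4 (exps4 m)) i = lookup m i"
  proof (cases "i < 4")
    case True
    then show ?thesis by (auto simp: less_4_cases exps4_def monom4_def lookup_add lookup_single)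
  next
    case False
    then have "lookup m i = 0" using assms by (auto simp: in_keys_iff)
    with False show ?thesis
      by (simp add: exps4_def monom4_def lookup_add lookup_single when_def)
  qed
qed

lemma exps4_inj_on: "keys m \<subseteq> {0..<4} \<Longrightarrow> keys m' \<subseteq> {0..<4} \<Longrightarrow> exps4 m = exps4 m' \<Longrightarrow> m = m'"
  by (metis monom4_exps4)

lemma exps4_add:
  "exps4 m = (a0, a1, a2, a3) \<Longrightarrow> exps4 m' = (b0, b1, b2, b3) \<Longrightarrow>
     exps4 (m + m') = (a0 + b0, a1 + b1, a2 + b2, a3 + b3)"
  by (simp add: exps4_def lookup_add)

lemma monom4_add: "monom4 (a0, a1, a2, a3) + monom4 (b0, b1, b2, b3) = monom4 (a0 + b0, a1 + b1, a2 + b2, a3 + b3)"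
  by (simp add: monom4_def single_add ac_simps)

lemma lex4_add_mono:
  fixes x0 x1 x2 x3 a0 a1 a2 a3 y0 y1 y2 y3 b0 b1 b2 b3 :: nat
  assumes "(x0, x1, x2, x3) \<le> (a0, a1, a2, a3)" "(y0, y1, y2, y3) \<le> (b0, b1, b2, b3)"
  shows "(x0 + y0, x1 + y1, x2 + y2, x3 + y3) \<le> (a0 + b0, a1 + b1, a2 + b2, a3 + b3)"
    and "(x0 + y0, x1 + y1, x2 + y2, x3 + y3) = (a0 + b0, a1 + b1, a2 + b2, a3 + b3) \<Longrightarrow>
           (x0, x1, x2, x3) = (a0, a1, a2, a3) \<and> (y0, y1, y2, y3) = (b0, b1, b2, b3)"
  using assms by (auto simp: less_eq_prod_simp less_prod_simp)

definition lex_head :: "rpoly \<Rightarrow> nat \<times> nat \<times> nat \<times> nat \<Rightarrow> real \<Rightarrow> bool" where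
  "lex_head p t c \<longleftrightarrow> p \<in> poly4 \<and> (\<forall>m\<in>keys p. exps4 m \<le> t) \<and> lookup p (monom4 t) = c"

(* The leading exponent and coefficient are given by equations, so that the rule applies
   backwards and leaves the arithmetic to simp; likewise for lex_head_power. *)

lemma lex_head_mult:
  assumes p: "lex_head p (a0, a1, a2, a3) \<alpha>" and q: "lex_head q (b0, b1, b2, b3) \<beta>"
    and t: "t = (a0 + b0, a1 + b1, a2 + b2, a3 + b3)" and \<gamma>: "\<gamma> = \<alpha> * \<beta>"
  shows "lex_head (p * q) t \<gamma>"
proof -
  have bound_and_unique: "exps4 (l + r) \<le> t \<and>
      (l + r = monom4 t \<longleftrightarrow> l = monom4 (a0, a1, a2, a3) \<and> r = monom4 (b0, b1, b2, b3))"
    if l: "l \<in> keys p" and r: "r \<in> keys q" for l r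
  proof -
    obtain x0 x1 x2 x3 where xl: "exps4 l = (x0, x1, x2, x3)" by (cases "exps4 l") auto
    obtain y0 y1 y2 y3 where yr: "exps4 r = (y0, y1, y2, y3)" by (cases "exps4 r") auto
    have le: "(x0, x1, x2, x3) \<le> (a0, a1, a2, a3)" "(y0, y1, y2, y3) \<le> (b0, b1, b2, b3)"
      using p q l r xl yr by (auto simp: lex_head_def)
    have "l = monom4 (exps4 l)" "r = monom4 (exps4 r)"
      using p q l r by (auto intro!: monom4_exps4[symmetric] simp: lex_head_def poly4_iff)
    then show ?thesis
      using lex4_add_mono[OF le] exps4_add[OF xl yr] monom4_add t xl yr
      by (metis exps4_monom4)
  qed
  have "lookup (p * q) (monom4 t) =
      (\<Sum>l\<in>keys p. \<Sum>r\<in>keys q.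
         if l = monom4 (a0, a1, a2, a3) \<and> r = monom4 (b0, b1, b2, b3) then lookup p l * lookup q r else 0)"
    unfolding times_eq_sum_single[of p q] lookup_sum lookup_single when_def
    by (intro sum.cong refl) (use bound_and_unique in auto)
  also have "\<dots> = (\<Sum>l\<in>keys p. if l = monom4 (a0, a1, a2, a3) then
      (\<Sum>r\<in>keys q. if r = monom4 (b0, b1, b2, b3) then lookup p l * lookup q r else 0) else 0)"
    by (intro sum.cong refl) auto
  also have "\<dots> = \<alpha> * \<beta>"
    using p q by (simp add: sum.delta lex_head_def in_keys_iff)
  finally show ?thesis
    using p q bound_and_unique \<gamma> by (auto simp: lex_head_def dest!: subsetD[OF keys_mult])
qed

lemma lex_head_coeff_above: "lex_head p t \<alpha> \<Longrightarrow> t < t' \<Longrightarrow> lookup p (monom4 t') = 0"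
  unfolding lex_head_def by (metis in_keys_iff exps4_monom4 leD)

lemma lex_head_add_lower:
  assumes "lex_head p t \<alpha>" "lex_head q t' \<beta>" "t' < t"
  shows "lex_head (p + q) t \<alpha>"
proof -
  have "lookup q (monom4 t) = 0"
    using lex_head_coeff_above[OF assms(2,3)] .
  then show ?thesis
    using assms unfolding lex_head_def by (auto simp: lookup_add dest!: subsetD[OF keys_add])
qed

lemma lex_head_Const_mult: "lex_head p t \<alpha> \<Longrightarrow> lex_head (Const c * p) t (c * \<alpha>)"
  unfolding lex_head_def by (auto simp: lookup_Const_mult dest: subsetD[OF keys_Const_mult])

lemma lex_head_lookup: "lex_head p t c \<Longrightarrow> lookup p (monom4 t) = c"
  by (simp add: lex_head_def)

lemma lex_head_1: "lex_head 1 (0, 0, 0, 0) 1"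
proof -
  have "monom4 (0, 0, 0, 0) = 0" "exps4 0 = (0, 0, 0, 0)"
    by (simp_all add: monom4_def exps4_def)
  then show ?thesis by (simp add: lex_head_def)
qed

lemma lex_head_power:
  "lex_head p (a0, a1, a2, a3) \<alpha> \<Longrightarrow> t = (k * a0, k * a1, k * a2, k * a3) \<Longrightarrow> \<gamma> = \<alpha> ^ k \<Longrightarrow>
     lex_head (p ^ k) t \<gamma>"
proof (induct k arbitrary: t \<gamma>)
  case 0 then show ?case using lex_head_1 by simp
next
  case (Suc k)
  then show ?case
    unfolding power_Suc by (intro lex_head_mult[of p a0 a1 a2 a3 \<alpha> "p ^ k"]) auto
qed

lemma lex_head_Var:
  "lex_head (Var 0) (1, 0, 0, 0) 1" "lex_head (Var 1) (0, 1, 0, 0) 1"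
  "lex_head (Var 2) (0, 0, 1, 0) 1" "lex_head (Var 3) (0, 0, 0, 1) 1"
proof -
  have "lex_head (Var i) (exps4 (single i 1)) 1" if "i < 4" for i
  proof -
    have "Var i \<in> poly4" using that by simp
    then show ?thesis
      using that monom4_exps4[of "single i 1"] by (simp add: lex_head_def) (simp add: Var_def)
  qed
  from this[of 0] this[of 1] this[of 2] this[of 3]
  show "lex_head (Var 0) (1, 0, 0, 0) 1" "lex_head (Var 1) (0, 1, 0, 0) 1"
    "lex_head (Var 2) (0, 0, 1, 0) 1" "lex_head (Var 3) (0, 0, 0, 1) 1"
    by (simp_all add: exps4_def lookup_single)
qed

lemmas lex_head_intros = lex_head_add_lower lex_head_mult lex_head_power lex_head_Var

section \<open>Weyl-invariant polynomials\<close>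

definition pont1 :: rpoly where
  "pont1 = Var 0 ^ 2 + Var 1 ^ 2 + Var 2 ^ 2 + Var 3 ^ 2"

definition pont2 :: rpoly where
  "pont2 = Var 0 ^ 2 * Var 1 ^ 2 + Var 0 ^ 2 * Var 2 ^ 2 + Var 0 ^ 2 * Var 3 ^ 2
         + Var 1 ^ 2 * Var 2 ^ 2 + Var 1 ^ 2 * Var 3 ^ 2 + Var 2 ^ 2 * Var 3 ^ 2"

definition pont3 :: rpoly where
  "pont3 = Var 0 ^ 2 * Var 1 ^ 2 * Var 2 ^ 2 + Var 0 ^ 2 * Var 1 ^ 2 * Var 3 ^ 2
         + Var 0 ^ 2 * Var 2 ^ 2 * Var 3 ^ 2 + Var 1 ^ 2 * Var 2 ^ 2 * Var 3 ^ 2"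

definition euler :: rpoly where
  "euler = Var 0 * Var 1 * Var 2 * Var 3"

definition power_sum_sq :: "nat \<Rightarrow> rpoly" where
  "power_sum_sq k = (\<Sum>i\<in>{0..<4}. Var i ^ (2 * k))"

lemma power_sum_sq_expand:
  "power_sum_sq k = Var 0 ^ (2 * k) + Var 1 ^ (2 * k) + Var 2 ^ (2 * k) + Var 3 ^ (2 * k)"
  by (simp add: power_sum_sq_def atLeast0LessThan lessThan_nat_numeral add_ac)

lemma pont1_power_sums: "pont1 = power_sum_sq 1"
  by (simp add: power_sum_sq_expand pont1_def)

lemma newton_identity_2:
  fixes a b c d :: "'a::idom"
  shows "2 * (a^2*b^2 + a^2*c^2 + a^2*d^2 + b^2*c^2 + b^2*d^2 + c^2*d^2) =
           (a^2 + b^2 + c^2 + d^2)^2 - (a^4 + b^4 + c^4 + d^4)"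
  by algebra

lemma newton_identity_3:
  fixes a b c d :: "'a::idom"
  shows "6 * (a^2*b^2*c^2 + a^2*b^2*d^2 + a^2*c^2*d^2 + b^2*c^2*d^2) =
           (a^2 + b^2 + c^2 + d^2)^3 - 3 * (a^2 + b^2 + c^2 + d^2) * (a^4 + b^4 + c^4 + d^4)
           + 2 * (a^6 + b^6 + c^6 + d^6)"
  by algebra

lemma pont2_power_sums: "2 * pont2 = power_sum_sq 1 ^ 2 - power_sum_sq 2"
  using newton_identity_2[of "Var 0" "Var 1" "Var 2" "Var 3"]
  by (simp add: pont2_def power_sum_sq_expand power_mult)

lemma pont3_power_sums:
  "6 * pont3 = power_sum_sq 1 ^ 3 - 3 * power_sum_sq 1 * power_sum_sq 2 + 2 * power_sum_sq 3"
  using newton_identity_3[of "Var 0" "Var 1" "Var 2" "Var 3"]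
  by (simp add: pont3_def power_sum_sq_expand power_mult)

lemma euler_prod: "euler = (\<Prod>i\<in>{0..<4}. Var i)"
  by (simp add: euler_def atLeast0LessThan lessThan_nat_numeral mult_ac)

definition weyl_invariant :: "rpoly \<Rightarrow> bool" where
  "weyl_invariant p \<longleftrightarrow> (\<forall>\<pi> \<epsilon>. (\<pi>, \<epsilon>) \<in> weyl_D4 \<longrightarrow> subst (weyl_D4_subst \<pi> \<epsilon>) p = p)"

lemma HBSO8_iff: "p \<in> HBSO8 \<longleftrightarrow> p \<in> poly4 \<and> weyl_invariant p"
  by (auto simp: HBSO8_def weyl_invariant_def)

lemma weyl_D4_subst_eq:
  "\<pi> permutes {0..<4} \<Longrightarrow>
     weyl_D4_subst \<pi> \<epsilon> = (\<lambda>i. Const (if i < 4 then \<epsilon> i else 1) * Var (\<pi> i))"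
  by (auto simp: fun_eq_iff weyl_D4_subst_def permutes_not_in)

lemma weyl_invariant_add [simp]:
  "weyl_invariant p \<Longrightarrow> weyl_invariant q \<Longrightarrow> weyl_invariant (p + q)"
  by (auto simp: weyl_invariant_def subst_add)

lemma weyl_invariant_diff [simp]:
  "weyl_invariant p \<Longrightarrow> weyl_invariant q \<Longrightarrow> weyl_invariant (p - q)"
  by (auto simp: weyl_invariant_def subst_diff)

lemma weyl_invariant_mult [simp]:
  "weyl_invariant p \<Longrightarrow> weyl_invariant q \<Longrightarrow> weyl_invariant (p * q)"
  by (auto simp: weyl_invariant_def subst_mult)

lemma weyl_invariant_power [simp]: "weyl_invariant p \<Longrightarrow> weyl_invariant (p ^ n)"
  by (auto simp: weyl_invariant_def subst_power)

lemma weyl_invariant_Const [simp]: "weyl_invariant (Const c)"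
  by (simp add: weyl_invariant_def)

lemma weyl_invariant_numeral [simp]: "weyl_invariant (numeral n)"
  by (simp add: weyl_invariant_def)

lemma weyl_invariant_cancel_numeral:
  assumes "weyl_invariant (numeral n * p)" shows "weyl_invariant p"
proof -
  have inverse: "Const (1 / numeral n) * numeral n = (1 :: rpoly)"
    using Const_inverse_mult[of "numeral n"] by simp
  have "x = y" if "(numeral n :: rpoly) * x = numeral n * y" for x y
    using arg_cong[OF that, of "(*) (Const (1 / numeral n))"]
    by (simp add: mult.assoc[symmetric] inverse)
  with assms show ?thesis
    by (simp add: weyl_invariant_def subst_mult)
qed

lemma weyl_invariant_subst:
  "(\<And>i. weyl_invariant (s i)) \<Longrightarrow> weyl_invariant (subst s p)"
  by (simp add: weyl_invariant_def subst_subst split_beta)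

lemma weyl_invariant_power_sum_sq: "weyl_invariant (power_sum_sq k)"
  unfolding weyl_invariant_def weyl_D4_def
proof safe
  fix \<pi> :: "nat \<Rightarrow> nat" and \<epsilon> :: "nat \<Rightarrow> real"
  assume \<pi>: "\<pi> permutes {0..<4}" and \<epsilon>: "\<forall>i<4. \<epsilon> i = 1 \<or> \<epsilon> i = - 1"
  have "subst (weyl_D4_subst \<pi> \<epsilon>) (power_sum_sq k) = (\<Sum>i\<in>{0..<4}. (Const (\<epsilon> i) * Var (\<pi> i)) ^ (2 * k))"
    by (simp add: power_sum_sq_def subst_sum subst_power weyl_D4_subst_def)
  also have "\<dots> = (\<Sum>i\<in>{0..<4}. Var (\<pi> i) ^ (2 * k))"
  proof (rule sum.cong[OF refl])
    fix i assume "i \<in> {0..<4::nat}"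
    then have "Const (\<epsilon> i) ^ (2 * k) = 1"
      using \<epsilon> by (auto simp: Const_power[symmetric] power_mult)
    then show "(Const (\<epsilon> i) * Var (\<pi> i)) ^ (2 * k) = Var (\<pi> i) ^ (2 * k)"
      by (simp add: power_mult_distrib)
  qed
  also have "\<dots> = power_sum_sq k"
    using sum.permute[OF \<pi>, of "\<lambda>i. Var i ^ (2 * k)"] by (simp add: power_sum_sq_def comp_def)
  finally show "subst (weyl_D4_subst \<pi> \<epsilon>) (power_sum_sq k) = power_sum_sq k" .
qed

lemma weyl_invariant_pont1: "weyl_invariant pont1"
  by (simp add: pont1_power_sums weyl_invariant_power_sum_sq)

lemma weyl_invariant_pont2: "weyl_invariant pont2"
proof (rule weyl_invariant_cancel_numeral)
  show "weyl_invariant (2 * pont2)"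
    by (simp add: pont2_power_sums weyl_invariant_power_sum_sq)
qed

lemma weyl_invariant_pont3: "weyl_invariant pont3"
proof (rule weyl_invariant_cancel_numeral)
  show "weyl_invariant (6 * pont3)"
    by (simp add: pont3_power_sums weyl_invariant_power_sum_sq)
qed

(* The one place where evenness of the number of sign changes matters: W(B_4) does not fix e. *)

lemma weyl_invariant_euler: "weyl_invariant euler"
  unfolding weyl_invariant_def weyl_D4_def
proof safe
  fix \<pi> :: "nat \<Rightarrow> nat" and \<epsilon> :: "nat \<Rightarrow> real"
  assume \<pi>: "\<pi> permutes {0..<4}" and \<epsilon>: "(\<Prod>i<4. \<epsilon> i) = 1"
  have "subst (weyl_D4_subst \<pi> \<epsilon>) euler = Const (\<Prod>i\<in>{0..<4}. \<epsilon> i) * (\<Prod>i\<in>{0..<4}. Var (\<pi> i))"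
    by (simp add: euler_prod subst_prod prod.distrib Const_prod weyl_D4_subst_def)
  also have "\<dots> = euler"
    using \<epsilon> prod.permute[OF \<pi>, of Var] by (simp add: euler_prod atLeast0LessThan comp_def)
  finally show "subst (weyl_D4_subst \<pi> \<epsilon>) euler = euler" .
qed

section \<open>The invariants form a polynomial algebra\<close>

definition pont_gen :: "nat \<Rightarrow> rpoly" where
  "pont_gen i = (if i = 0 then pont1 else if i = 1 then pont2 else if i = 2 then euler
                 else if i = 3 then pont3 else 0)"

definition pont_map :: "rpoly \<Rightarrow> rpoly" where
  "pont_map = subst pont_gen"

lemma pont_gen_in_HBSO8: "pont_gen i \<in> HBSO8"
proof -
  have "pont1 \<in> poly4" "pont2 \<in> poly4" "euler \<in> poly4" "pont3 \<in> poly4"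
    by (simp_all add: pont1_def pont2_def euler_def pont3_def)
  then show ?thesis
    using weyl_invariant_pont1 weyl_invariant_pont2 weyl_invariant_euler weyl_invariant_pont3
      weyl_invariant_Const[of 0]
    by (simp add: pont_gen_def HBSO8_iff)
qed

lemma pont_map_in_HBSO8: "pont_map q \<in> HBSO8"
  using pont_gen_in_HBSO8
  by (auto simp: pont_map_def HBSO8_iff intro!: subst_in_poly4 weyl_invariant_subst)

lemma subst_monom_pont_gen:
  assumes "keys n \<subseteq> {0..<4}"
  shows "subst_monom pont_gen n =
           pont1 ^ lookup n 0 * pont2 ^ lookup n 1 * euler ^ lookup n 2 * pont3 ^ lookup n 3"
proof -
  have "subst_monom pont_gen n = (\<Prod>i\<in>{0..<4}. pont_gen i ^ lookup n i)"
    by (rule subst_monom_superset) (use assms in auto)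
  then show ?thesis
    by (simp add: atLeast0LessThan lessThan_nat_numeral pont_gen_def mult_ac)
qed

(* The leading monomials of p_1, p_2, e, p_3 are L_1^2, L_1^2 L_2^2, L_1 L_2 L_3 L_4, L_1^2 L_2^2 L_3^2. *)

definition lead_exps :: "nat \<times> nat \<times> nat \<times> nat \<Rightarrow> nat \<times> nat \<times> nat \<times> nat" where
  "lead_exps t = (case t of (n0, n1, n2, n3) \<Rightarrow>
     (2 * n0 + 2 * n1 + n2 + 2 * n3, 2 * n1 + n2 + 2 * n3, n2 + 2 * n3, n2))"

lemma inj_lead_exps: "inj lead_exps"
  by (intro injI) (auto simp: lead_exps_def split: prod.splits)

lemma lex_head_pont1: "lex_head pont1 (2, 0, 0, 0) 1"
  unfolding pont1_def by (rule lex_head_intros | simp)+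

lemma lex_head_pont2: "lex_head pont2 (2, 2, 0, 0) 1"
  unfolding pont2_def by (rule lex_head_intros | simp)+

lemma lex_head_euler: "lex_head euler (1, 1, 1, 1) 1"
  unfolding euler_def by (rule lex_head_intros | simp)+

lemma lex_head_pont3: "lex_head pont3 (2, 2, 2, 0) 1"
  unfolding pont3_def by (rule lex_head_intros | simp)+

lemma lex_head_subst_monom_pont_gen:
  assumes "keys n \<subseteq> {0..<4}"
  shows "lex_head (subst_monom pont_gen n) (lead_exps (exps4 n)) 1"
  unfolding subst_monom_pont_gen[OF assms] lead_exps_def exps4_def
  by (rule lex_head_intros lex_head_pont1 lex_head_pont2 lex_head_euler lex_head_pont3 | simp)+

lemma lookup_subst_monom_pont_gen_lead:
  assumes n: "keys n \<subseteq> {0..<4}" and n0: "keys n0 \<subseteq> {0..<4}"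
    and le: "lead_exps (exps4 n) \<le> lead_exps (exps4 n0)"
  shows "lookup (subst_monom pont_gen n) (monom4 (lead_exps (exps4 n0))) = (if n = n0 then 1 else 0)"
proof (cases "n = n0")
  case True
  then show ?thesis using lex_head_lookup[OF lex_head_subst_monom_pont_gen[OF n]] by simp
next
  case False
  then have "exps4 n \<noteq> exps4 n0" using exps4_inj_on[OF n n0] by blast
  then have "lead_exps (exps4 n) < lead_exps (exps4 n0)"
    using le inj_lead_exps by (simp add: order.strict_iff_order inj_eq)
  then show ?thesis
    using lex_head_coeff_above[OF lex_head_subst_monom_pont_gen[OF n]] False by simp
qed

lemma pont_map_eq_0_imp:
  assumes q: "q \<in> poly4" and zero: "pont_map q = 0"
  shows "q = 0"
proof (rule ccontr)
  assume "q \<noteq> 0"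
  let ?E = "\<lambda>n. lead_exps (exps4 n)"
  have "Max (?E ` keys q) \<in> ?E ` keys q" using \<open>q \<noteq> 0\<close> by (intro Max_in) auto
  then obtain n0 where n0: "n0 \<in> keys q" "?E n0 = Max (?E ` keys q)" by auto
  have keys_q: "keys n \<subseteq> {0..<4}" if "n \<in> keys q" for n
    using q that by (simp add: poly4_iff)
  have le: "?E n \<le> ?E n0" if "n \<in> keys q" for n
    using that n0(2) by (simp add: Max_ge_iff)
  have "lookup (pont_map q) (monom4 (?E n0)) =
          (\<Sum>n\<in>keys q. lookup q n * lookup (subst_monom pont_gen n) (monom4 (?E n0)))"
    by (simp add: pont_map_def subst_eq_sum lookup_sum lookup_Const_mult)
  also have "\<dots> = (\<Sum>n\<in>keys q. if n = n0 then lookup q n else 0)"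
    by (intro sum.cong refl)
       (simp add: lookup_subst_monom_pont_gen_lead[OF keys_q keys_q[OF n0(1)] le])
  also have "\<dots> = lookup q n0"
    using n0(1) by simp
  finally show False using zero n0(1) by (simp add: in_keys_iff)
qed

lemma inj_on_pont_map: "inj_on pont_map poly4"
proof (rule inj_onI)
  fix p q assume "p \<in> poly4" "q \<in> poly4" "pont_map p = pont_map q"
  then have "p - q = 0"
    using pont_map_eq_0_imp[of "p - q"] by (simp add: pont_map_def subst_diff)
  then show "p = q" by simp
qed

lemma lookup_weyl_invariant:
  assumes f: "weyl_invariant f" and M: "keys M \<subseteq> {0..<4}" and W: "(\<pi>, \<epsilon>) \<in> weyl_D4"
  shows "lookup f (rename_monom \<pi> M) = lookup f M * (\<Prod>k\<in>{0..<4}. \<epsilon> k ^ lookup M k)"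
proof -
  have \<pi>: "\<pi> permutes {0..<4}" using W by (simp add: weyl_D4_def)
  have "subst (weyl_D4_subst \<pi> \<epsilon>) f = f"
    using f W by (simp add: weyl_invariant_def)
  then have "lookup f (rename_monom \<pi> M) =
          lookup (subst (\<lambda>i. Const (if i < 4 then \<epsilon> i else 1) * Var (\<pi> i)) f) (rename_monom \<pi> M)"
    by (simp add: weyl_D4_subst_eq[OF \<pi>])
  also have "\<dots> = lookup f M * (\<Prod>k\<in>keys M. (if k < 4 then \<epsilon> k else 1) ^ lookup M k)"
    by (rule lookup_subst_scaled_rename) (rule permutes_inj[OF \<pi>])
  also have "(\<Prod>k\<in>keys M. (if k < 4 then \<epsilon> k else 1) ^ lookup M k) = (\<Prod>k\<in>{0..<4}. \<epsilon> k ^ lookup M k)"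
    by (rule prod.mono_neutral_cong_left) (use M in \<open>auto simp: in_keys_iff subset_iff\<close>)
  finally show ?thesis .
qed

lemma weyl_invariant_lookup_transpose:
  assumes "weyl_invariant f" "keys M \<subseteq> {0..<4}" "i < 4" "j < 4"
  shows "lookup f (rename_monom (Transposition.transpose i j) M) = lookup f M"
proof -
  have "(Transposition.transpose i j, \<lambda>_. 1) \<in> weyl_D4"
    using assms(3,4) by (simp add: weyl_D4_def permutes_swap_id)
  then show ?thesis
    using lookup_weyl_invariant[OF assms(1,2)] by simp
qed

lemma lookup_rename_monom_transpose:
  "lookup (rename_monom (Transposition.transpose i j) M) k = lookup M (Transposition.transpose i j k)"
  using lookup_rename_monom[of "Transposition.transpose i j" M "Transposition.transpose i j k"] by simp

lemma weyl_invariant_exps_even: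
  assumes f: "weyl_invariant f" and M: "M \<in> keys f" "keys M \<subseteq> {0..<4}"
    and ij: "i < 4" "j < 4" "i \<noteq> j"
  shows "even (lookup M i + lookup M j)"
proof -
  define \<epsilon> where "\<epsilon> k = (if k \<in> {i, j} then - 1 else (1::real))" for k
  have prod_ij: "(\<Prod>k\<in>A. \<epsilon> k ^ e k) = (-1) ^ (e i + e j)" if "{i, j} \<subseteq> A" "finite A" for A e
  proof -
    have "(\<Prod>k\<in>A. \<epsilon> k ^ e k) = (\<Prod>k\<in>{i, j}. (-1) ^ e k)"
      using that by (intro prod.mono_neutral_cong_right) (auto simp: \<epsilon>_def)
    then show ?thesis using ij(3) by (simp add: power_add)
  qed
  have "((\<lambda>k. k), \<epsilon>) \<in> weyl_D4"
    using ij prod_ij[of "{..<4}" "\<lambda>_. 1"] permutes_id[unfolded id_def]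
    by (auto simp: weyl_D4_def \<epsilon>_def)
  from lookup_weyl_invariant[OF f M(2) this]
  have "lookup f M = lookup f M * (-1) ^ (lookup M i + lookup M j)"
    using ij prod_ij[of "{0..<4}" "lookup M"] by (simp add: rename_monom_id)
  moreover have "lookup f M \<noteq> 0" using M(1) by (simp add: in_keys_iff)
  ultimately show ?thesis
    by (simp add: minus_one_power_iff split: if_splits)
qed

lemma weyl_invariant_head_sorted:
  assumes f: "weyl_invariant f" and M: "M \<in> keys f" "keys M \<subseteq> {0..<4}"
    and head: "\<forall>m\<in>keys f. exps4 m \<le> exps4 M" and i: "i < 3"
  shows "lookup M (Suc i) \<le> lookup M i"
proof (rule ccontr)
  assume less: "\<not> lookup M (Suc i) \<le> lookup M i"
  let ?M' = "rename_monom (Transposition.transpose i (Suc i)) M"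
  have "lookup f ?M' = lookup f M"
    using weyl_invariant_lookup_transpose[OF f M(2)] i by simp
  then have "exps4 ?M' \<le> exps4 M"
    using M(1) head by (simp add: in_keys_iff)
  moreover have "i = 0 \<or> i = 1 \<or> i = 2" using i by auto
  ultimately show False
    using less by (auto simp: exps4_def lookup_rename_monom_transpose)
qed

lemma weyl_invariant_head_eq_lead_exps:
  assumes f: "f \<in> HBSO8" and M: "M \<in> keys f" and head: "\<forall>m\<in>keys f. exps4 m \<le> exps4 M"
  obtains N where "keys N \<subseteq> {0..<4}" "lead_exps (exps4 N) = exps4 M"
proof -
  have inv: "weyl_invariant f" and KM: "keys M \<subseteq> {0..<4}"
    using f M by (auto simp: HBSO8_iff poly4_iff)
  obtain a0 a1 a2 a3 where A: "exps4 M = (a0, a1, a2, a3)" by (cases "exps4 M") auto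
  have "lookup M 0 = a0" "lookup M 1 = a1" "lookup M 2 = a2" "lookup M 3 = a3"
    using A by (simp_all add: exps4_def)
  moreover note weyl_invariant_head_sorted[OF inv M KM head, of 0]
    weyl_invariant_head_sorted[OF inv M KM head, of 1]
    weyl_invariant_head_sorted[OF inv M KM head, of 2]
    weyl_invariant_exps_even[OF inv M KM, of 0 1]
    weyl_invariant_exps_even[OF inv M KM, of 1 2]
    weyl_invariant_exps_even[OF inv M KM, of 2 3]
  ultimately have "a1 \<le> a0" "a2 \<le> a1" "a3 \<le> a2" "even (a0 + a1)" "even (a1 + a2)" "even (a2 + a3)"
    by (simp_all add: numeral_eq_Suc)
  then have "lead_exps ((a0 - a1) div 2, (a1 - a2) div 2, a3, (a2 - a3) div 2) = exps4 M"
    by (auto simp: A lead_exps_def)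
  then show ?thesis
    by (intro that[of "monom4 ((a0 - a1) div 2, (a1 - a2) div 2, a3, (a2 - a3) div 2)"])
       (simp_all add: keys_monom4)
qed

lemma pont_map_single: "pont_map (single N c) = Const c * subst_monom pont_gen N"
  by (simp add: pont_map_def subst_single)

lemma pont_map_cancel_head:
  assumes f: "f \<in> HBSO8" and M: "M \<in> keys f" and head: "\<forall>m\<in>keys f. exps4 m \<le> exps4 M"
  obtains q where "q \<in> poly4" "f - pont_map q \<in> HBSO8" "\<forall>m\<in>keys (f - pont_map q). exps4 m < exps4 M"
proof -
  obtain N where N: "keys N \<subseteq> {0..<4}" "lead_exps (exps4 N) = exps4 M"
    using weyl_invariant_head_eq_lead_exps[OF assms] .
  define q where "q = single N (lookup f M)"
  define f' where "f' = f - pont_map q"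
  have KM: "keys M \<subseteq> {0..<4}" using f M by (auto simp: HBSO8_iff poly4_iff)
  have "lex_head (subst_monom pont_gen N) (exps4 M) 1"
    using lex_head_subst_monom_pont_gen[OF N(1)] N(2) by simp
  from lex_head_Const_mult[OF this, of "lookup f M"]
  have gen_head: "lex_head (Const (lookup f M) * subst_monom pont_gen N) (exps4 M) (lookup f M)"
    by simp
  have f': "f' \<in> HBSO8"
    using f pont_map_in_HBSO8[of q] unfolding f'_def HBSO8_iff by simp
  have "exps4 m < exps4 M" if m: "m \<in> keys f'" for m
  proof -
    have "m \<in> keys f \<or> m \<in> keys (Const (lookup f M) * subst_monom pont_gen N)"
      using m keys_diff[of f "pont_map q"] by (auto simp: f'_def q_def pont_map_single)
    then have "exps4 m \<le> exps4 M" using head gen_head by (auto simp: lex_head_def)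
    moreover have "lookup f' (monom4 (exps4 M)) = 0"
      using gen_head by (simp add: f'_def q_def pont_map_single lookup_minus lex_head_def monom4_exps4[OF KM])
    then have "m \<noteq> monom4 (exps4 M)" using m by (auto simp: in_keys_iff)
    then have "exps4 m \<noteq> exps4 M"
      using f' m monom4_exps4 by (fastforce simp: HBSO8_iff poly4_iff)
    ultimately show ?thesis by simp
  qed
  moreover have "q \<in> poly4" using N(1) by (simp add: q_def poly4_single)
  ultimately show ?thesis using that f' by (simp add: f'_def)
qed

lemma pont_map_surj:
  assumes "f \<in> HBSO8" shows "\<exists>q\<in>poly4. pont_map q = f"
proof -
  have "\<forall>f\<in>HBSO8. (\<forall>m\<in>keys f. exps4 m < a) \<longrightarrow> (\<exists>q\<in>poly4. pont_map q = f)" for a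
  proof (induction a rule: less_induct)
    case (less a)
    show ?case
    proof (intro ballI impI)
      fix f assume f: "f \<in> HBSO8" and bound: "\<forall>m\<in>keys f. exps4 m < a"
      show "\<exists>q\<in>poly4. pont_map q = f"
      proof (cases "f = 0")
        case True
        then show ?thesis by (intro bexI[of _ 0]) (simp_all add: pont_map_def)
      next
        case False
        then have "Max (exps4 ` keys f) \<in> exps4 ` keys f" by (intro Max_in) auto
        then obtain M where M: "M \<in> keys f" "exps4 M = Max (exps4 ` keys f)" by auto
        then have "\<forall>m\<in>keys f. exps4 m \<le> exps4 M" by simp
        then obtain q where q: "q \<in> poly4" "f - pont_map q \<in> HBSO8"
          "\<forall>m\<in>keys (f - pont_map q). exps4 m < exps4 M"
          using pont_map_cancel_head[OF f M(1)] by blast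
        moreover have "exps4 M < a" using bound M(1) by blast
        ultimately obtain q' where "q' \<in> poly4" "pont_map q' = f - pont_map q"
          using less.IH by blast
        then show ?thesis
          using q(1) by (intro bexI[of _ "q + q'"]) (simp_all add: pont_map_def subst_add)
      qed
    qed
  qed
  moreover obtain a0 a1 a2 a3 where max: "Max (exps4 ` keys f) = (a0, a1, a2, a3)"
    by (cases "Max (exps4 ` keys f)") auto
  have "exps4 m < (a0, a1, a2, Suc a3)" if "m \<in> keys f" for m
  proof -
    have "exps4 m \<le> (a0, a1, a2, a3)" using that max[symmetric] by simp
    also have "\<dots> < (a0, a1, a2, Suc a3)" by simp
    finally show ?thesis .
  qed
  ultimately show ?thesis using assms by blast
qed

lemma bij_betw_pont_map: "bij_betw pont_map poly4 HBSO8"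
  unfolding bij_betw_def using inj_on_pont_map pont_map_in_HBSO8 pont_map_surj by auto

section \<open>Triality\<close>

abbreviation half :: rpoly where
  "half \<equiv> Const (1 / 2)"

lemma two_times_half: "2 * half = 1"
  using Const_inverse_mult[of 2] by (simp add: mult.commute)

lemma triality_L_eq:
  "triality_L 0 = half * (Var 0 + Var 1 + Var 2 + Var 3)"
  "triality_L 1 = half * (Var 0 + Var 1 - Var 2 - Var 3)"
  "triality_L 2 = half * (Var 0 - Var 1 + Var 2 - Var 3)"
  "triality_L 3 = half * (- Var 0 + Var 1 + Var 2 - Var 3)"
  by (simp_all add: triality_L_def)

lemma triality_H_pont1: "triality_H pont1 = pont1"
  unfolding triality_H_def pont1_def subst_simps subst_Var triality_L_eq
  using two_times_half by algebra

lemma triality_H_pont2: "triality_H pont2 = 3 * half^3 * pont1^2 - half * pont2 - 3 * euler"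
  unfolding triality_H_def pont1_def pont2_def euler_def subst_simps subst_Var triality_L_eq
  using two_times_half by algebra

lemma triality_H_euler: "triality_H euler = - (half^4 * pont1^2) + half^2 * pont2 - half * euler"
  unfolding triality_H_def pont1_def pont2_def euler_def subst_simps subst_Var triality_L_eq
  using two_times_half by algebra

lemma triality_H_pont3:
  "triality_H pont3 = half^4 * pont1^3 - half^2 * pont1 * pont2 - half * pont1 * euler + pont3"
  unfolding triality_H_def pont1_def pont2_def pont3_def euler_def subst_simps subst_Var triality_L_eq
  using two_times_half by algebra

definition triality_pont_gen :: "nat \<Rightarrow> rpoly" where
  "triality_pont_gen i =
    (if i = 0 then Var 0
     else if i = 1 then 3 * half^3 * Var 0^2 - half * Var 1 - 3 * Var 2
     else if i = 2 then - (half^4 * Var 0^2) + half^2 * Var 1 - half * Var 2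
     else if i = 3 then half^4 * Var 0^3 - half^2 * Var 0 * Var 1 - half * Var 0 * Var 2 + Var 3
     else Var i)"

lemma triality_H_pont_gen: "triality_H (pont_gen i) = pont_map (triality_pont_gen i)"
proof -
  have "triality_H 0 = 0" by (simp add: triality_H_def)
  then show ?thesis
    using nat_cases_4[of i]
    by (auto simp: pont_gen_def triality_pont_gen_def pont_map_def subst_simps triality_H_pont1
        triality_H_pont2 triality_H_pont3 triality_H_euler)
qed

(* Images of a, b, c, d, in the variables X_0, X_1, X_2, X_3 standing for p_1, p_2, e, p_3. *)

definition abcd_gen :: "nat \<Rightarrow> rpoly" where
  "abcd_gen i =
    (if i = 0 then Var 0
     else if i = 1 then Const (sqrt 3) * Var 2
     else if i = 2 then half * Var 1 - half^3 * Var 0^2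
     else if i = 3 then Var 3 - Const (1/6) * Var 0 * Var 1
     else Var i)"

definition abcd_gen_inv :: "nat \<Rightarrow> rpoly" where
  "abcd_gen_inv i =
    (if i = 0 then Var 0
     else if i = 1 then 2 * Var 2 + half^2 * Var 0^2
     else if i = 2 then Const (1 / sqrt 3) * Var 1
     else if i = 3 then Var 3 + Const (1/6) * Var 0 * (2 * Var 2 + half^2 * Var 0^2)
     else Var i)"

lemma sqrt3_squared: "Const (sqrt 3) * Const (sqrt 3) = 3"
  by (simp add: Const_mult[symmetric])

lemma sqrt3_inverse: "Const (sqrt 3) * Const (1 / sqrt 3) = 1"
  by (simp add: Const_mult[symmetric])

lemma six_times_sixth: "6 * Const (1/6) = 1"
  using Const_inverse_mult[of 6] by (simp add: mult.commute)

lemma subst_abcd_gen_abcd_gen_inv: "subst abcd_gen (abcd_gen_inv i) = Var i"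
proof -
  have "subst abcd_gen (abcd_gen_inv 1) = Var 1"
    by (simp add: abcd_gen_def abcd_gen_inv_def subst_simps) (use two_times_half in algebra)
  moreover have "subst abcd_gen (abcd_gen_inv 2) = Var 2"
    by (simp add: abcd_gen_def abcd_gen_inv_def subst_simps) (use sqrt3_inverse in algebra)
  moreover have "subst abcd_gen (abcd_gen_inv 3) = Var 3"
    by (simp add: abcd_gen_def abcd_gen_inv_def subst_simps) (use two_times_half in algebra)
  ultimately show ?thesis
    using nat_cases_4[of i] by (auto simp: abcd_gen_def abcd_gen_inv_def)
qed

lemma subst_abcd_gen_inv_abcd_gen: "subst abcd_gen_inv (abcd_gen i) = Var i"
proof -
  have "subst abcd_gen_inv (abcd_gen 1) = Var 1"
    by (simp add: abcd_gen_def abcd_gen_inv_def subst_simps) (use sqrt3_inverse in algebra)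
  moreover have "subst abcd_gen_inv (abcd_gen 2) = Var 2"
    by (simp add: abcd_gen_def abcd_gen_inv_def subst_simps) (use two_times_half in algebra)
  moreover have "subst abcd_gen_inv (abcd_gen 3) = Var 3"
    by (simp add: abcd_gen_def abcd_gen_inv_def subst_simps)
  ultimately show ?thesis
    using nat_cases_4[of i] by (auto simp: abcd_gen_def abcd_gen_inv_def)
qed

lemma triality_abcd_var_eq:
  "triality_abcd_var 1 = - half * Var 1 + Const (sqrt 3) * half * Var 2"
  "triality_abcd_var 2 = - (Const (sqrt 3) * half) * Var 1 - half * Var 2"
proof -
  have c: "Const (cos (2 * pi / 3)) = - half" by (simp add: cos_120 Const_uminus)
  have s: "Const (sin (2 * pi / 3)) = Const (sqrt 3) * half" by (simp add: sin_120 Const_mult[symmetric])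
  show "triality_abcd_var 1 = - half * Var 1 + Const (sqrt 3) * half * Var 2"
    by (simp add: triality_abcd_var_def c s)
  show "triality_abcd_var 2 = - (Const (sqrt 3) * half) * Var 1 - half * Var 2"
    by (simp add: triality_abcd_var_def c s Const_uminus)
qed

lemma subst_triality_pont_gen_abcd_gen:
  "subst triality_pont_gen (abcd_gen i) = subst abcd_gen (triality_abcd_var i)"
proof -
  have "subst triality_pont_gen (abcd_gen 1) = subst abcd_gen (triality_abcd_var 1)"
    unfolding triality_abcd_var_eq by (simp add: abcd_gen_def triality_pont_gen_def subst_simps) algebra
  moreover have "subst triality_pont_gen (abcd_gen 2) = subst abcd_gen (triality_abcd_var 2)"
    unfolding triality_abcd_var_eq by (simp add: abcd_gen_def triality_pont_gen_def subst_simps)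
      (use two_times_half sqrt3_squared in algebra)
  moreover have "subst triality_pont_gen (abcd_gen 3) = subst abcd_gen (triality_abcd_var 3)"
    by (simp add: abcd_gen_def triality_pont_gen_def subst_simps triality_abcd_var_def)
      (use two_times_half six_times_sixth in algebra)
  ultimately show ?thesis
    using nat_cases_4[of i] by (auto simp: abcd_gen_def triality_pont_gen_def triality_abcd_var_def)
qed

section \<open>The isomorphism\<close>

definition abcd_iso :: "rpoly \<Rightarrow> rpoly" where
  "abcd_iso q = pont_map (subst abcd_gen q)"

lemma abcd_iso_eq_subst: "abcd_iso q = subst (\<lambda>i. pont_map (abcd_gen i)) q"
  by (simp add: abcd_iso_def pont_map_def subst_subst)

lemma abcd_iso_add: "abcd_iso (p + q) = abcd_iso p + abcd_iso q"
  by (simp add: abcd_iso_eq_subst subst_add)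

lemma abcd_iso_mult: "abcd_iso (p * q) = abcd_iso p * abcd_iso q"
  by (simp add: abcd_iso_eq_subst subst_mult)

lemma abcd_iso_Const: "abcd_iso (Const c) = Const c"
  by (simp add: abcd_iso_eq_subst)

lemma bij_betw_subst_abcd_gen: "bij_betw (subst abcd_gen) poly4 poly4"
proof (rule bij_betw_byWitness[where f' = "subst abcd_gen_inv"])
  have "abcd_gen i \<in> poly4" "abcd_gen_inv i \<in> poly4" if "i < 4" for i
    using that by (auto simp: less_4_cases abcd_gen_def abcd_gen_inv_def)
  then show "subst abcd_gen ` poly4 \<subseteq> poly4" "subst abcd_gen_inv ` poly4 \<subseteq> poly4"
    by (auto intro: subst_poly4_in_poly4)
  show "\<forall>q\<in>poly4. subst abcd_gen_inv (subst abcd_gen q) = q"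
    by (simp add: subst_subst subst_abcd_gen_inv_abcd_gen subst_Var_id)
  show "\<forall>q\<in>poly4. subst abcd_gen (subst abcd_gen_inv q) = q"
    by (simp add: subst_subst subst_abcd_gen_abcd_gen_inv subst_Var_id)
qed

lemma triality_abcd_in_poly4: "q \<in> poly4 \<Longrightarrow> triality_abcd q \<in> poly4"
  unfolding triality_abcd_def
  by (rule subst_poly4_in_poly4) (auto simp: less_4_cases triality_abcd_var_def)

lemma bij_betw_abcd_iso: "bij_betw abcd_iso poly4 HBSO8"
  using bij_betw_trans[OF bij_betw_subst_abcd_gen bij_betw_pont_map]
  by (simp add: abcd_iso_def[abs_def] comp_def)

lemma triality_H_abcd_iso: "triality_H (abcd_iso q) = abcd_iso (triality_abcd q)"
proof -
  have "triality_H (abcd_iso q) = subst (\<lambda>i. triality_H (pont_gen i)) (subst abcd_gen q)"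
    unfolding abcd_iso_def pont_map_def triality_H_def subst_subst ..
  also have "\<dots> = pont_map (subst triality_pont_gen (subst abcd_gen q))"
    by (simp only: triality_H_pont_gen pont_map_def subst_subst)
  also have "subst triality_pont_gen (subst abcd_gen q) = subst abcd_gen (triality_abcd q)"
    by (simp only: subst_subst subst_triality_pont_gen_abcd_gen triality_abcd_def)
  finally show ?thesis by (simp add: abcd_iso_def)
qed

lemma scale_vars_2_generators:
  "scale_vars (\<lambda>_. 2) pont1 = 4 * pont1" "scale_vars (\<lambda>_. 2) pont2 = 16 * pont2"
  "scale_vars (\<lambda>_. 2) euler = 16 * euler" "scale_vars (\<lambda>_. 2) pont3 = 64 * pont3"
  unfolding scale_vars_def pont1_def pont2_def euler_def pont3_def subst_simps subst_Var Const_numeral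
  by algebra+

lemma scale_vars_pont_map_abcd_gen:
  "scale_vars (\<lambda>_. 2) (pont_map (abcd_gen i)) = Const (4 ^ abcd_weight i) * pont_map (abcd_gen i)"
  using nat_cases_4[of i]
  by (auto simp: scale_vars_def abcd_gen_def abcd_weight_def pont_map_def pont_gen_def subst_simps
      scale_vars_2_generators[unfolded scale_vars_def, simplified])

lemma scale_vars_abcd_iso:
  "scale_vars (\<lambda>_. 2) (abcd_iso q) = abcd_iso (scale_vars (\<lambda>i. 4 ^ abcd_weight i) q)"
proof -
  have "scale_vars (\<lambda>_. 2) (abcd_iso q) = subst (\<lambda>i. scale_vars (\<lambda>_. 2) (pont_map (abcd_gen i))) q"
    unfolding abcd_iso_eq_subst scale_vars_def subst_subst ..
  also have "\<dots> = subst (\<lambda>i. Const (4 ^ abcd_weight i) * pont_map (abcd_gen i)) q"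
    by (simp only: scale_vars_pont_map_abcd_gen)
  also have "\<dots> = abcd_iso (scale_vars (\<lambda>i. 4 ^ abcd_weight i) q)"
    by (simp add: abcd_iso_eq_subst scale_vars_def subst_subst subst_mult)
  finally show ?thesis .
qed

lemma H_graded_abcd_iso:
  assumes "q \<in> poly4" shows "H_graded k (abcd_iso q) \<longleftrightarrow> whomog k q"
proof -
  have inj: "inj_on abcd_iso poly4" using bij_betw_abcd_iso by (rule bij_betw_imp_inj_on)
  have "scale_vars (\<lambda>i. 4 ^ abcd_weight i) q \<in> poly4"
    unfolding scale_vars_def by (rule subst_poly4_in_poly4[OF assms]) simp
  moreover have "Const (4 ^ k) * q \<in> poly4" using assms by simp
  moreover have "H_graded k (abcd_iso q) \<longleftrightarrow>
      abcd_iso (scale_vars (\<lambda>i. 4 ^ abcd_weight i) q) = abcd_iso (Const (4 ^ k) * q)"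
    by (simp add: H_graded_def homog_iff_scale_vars scale_vars_abcd_iso abcd_iso_mult abcd_iso_Const
        power_mult)
  ultimately show ?thesis
    by (simp add: whomog_iff_scale_vars inj_on_eq_iff[OF inj])
qed

theorem mainTheorem8:
  shows "\<exists>\<Phi> :: rpoly \<Rightarrow> rpoly.
     bij_betw \<Phi> HBSO8 poly4 \<and>
     (\<forall>p\<in>HBSO8. \<forall>q\<in>HBSO8. \<Phi> (p + q) = \<Phi> p + \<Phi> q) \<and>
     (\<forall>p\<in>HBSO8. \<forall>q\<in>HBSO8. \<Phi> (p * q) = \<Phi> p * \<Phi> q) \<and>
     (\<forall>c. \<Phi> (Const c) = Const c) \<and>
     (\<forall>p\<in>HBSO8. \<forall>k. H_graded k p \<longleftrightarrow> whomog k (\<Phi> p)) \<and>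
     (\<forall>p\<in>HBSO8. \<Phi> (triality_H p) = triality_abcd (\<Phi> p))"
proof (intro exI conjI ballI allI)
  let ?\<Phi> = "the_inv_into poly4 abcd_iso"
  note bij = bij_betw_abcd_iso
  show "bij_betw ?\<Phi> HBSO8 poly4" by (rule bij_betw_the_inv_into[OF bij])
  show "?\<Phi> (Const c) = Const c" for c
    using the_inv_into_f_f[OF bij_betw_imp_inj_on[OF bij], of "Const c"] by (simp add: abcd_iso_Const)
  fix p q assume p: "p \<in> HBSO8"
  show "?\<Phi> (p + q) = ?\<Phi> p + ?\<Phi> q" if "q \<in> HBSO8"
    using the_inv_into_commute2[OF bij, of "(+)" "(+)"] abcd_iso_add p that by simp
  show "?\<Phi> (p * q) = ?\<Phi> p * ?\<Phi> q" if "q \<in> HBSO8"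
    using the_inv_into_commute2[OF bij, of "(*)" "(*)"] abcd_iso_mult p that by simp
  show "?\<Phi> (triality_H p) = triality_abcd (?\<Phi> p)"
    using the_inv_into_commute[OF bij, of triality_abcd triality_H] triality_H_abcd_iso
      triality_abcd_in_poly4 p by simp
  show "H_graded k p \<longleftrightarrow> whomog k (?\<Phi> p)" for k
    using H_graded_abcd_iso[OF bij_betw_apply[OF bij_betw_the_inv_into[OF bij] p], of k]
      f_the_inv_into_f_bij_betw[OF bij p] by simp
qed

end
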